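(* Let $n\ge3$. For every 2-page book drawing $D$ of $K_n$ and every integer $k$ with $0\le k<n/2-1$, \[ E_{\le\le k}(D)\ge 3\binom{k+3}3 . \]
   Context: A 2-page book drawing of $K_n$: vertices on a line (spine), each edge a simple arc in one of the two closed half-planes bounded by the spine; one may take the vertices to be $(1,0),\dots,(n,0)$ and non-spine edges to be semicircles, giving a good drawing. In a good drawing, for distinct vertices $p,q,r$, $r$ is on the left (right) of $\overrightarrow{pq}$ if the triangle formed by edges $pq,qr,rp$ traced in order $p,q,r$ is oriented counterclockwise (clockwise). An edge $pq$ is a $k$-edge if exactly $k$ of the other $n-2$ vertices lie on one side of it (so also an $(n-2-k)$-edge); each edge is a $k$-edge for a unique $0\le k\le\lfloor n/2\rfloor-1$, and $E_k(D)$ counts edges with that index. $E_{\le k}(D)=\sum_{j=0}^kE_j(D)$ and $E_{\le\le k}(D)=\sum_{j=0}^kE_{\le j}(D)=\sum_{i=0}^k(k+1-i)E_i(D)$. *)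

theory Defs
  imports Complex_Main
begin

(* A 2-page book drawing of K_n with vertices 0,...,n-1 placed in this order on the
   spine (the real axis), each edge {i,j} with i<j drawn as a semicircle in the upper
   page (page i j = True) or in the lower page (page i j = False).  Only the values
   page i j with i < j are relevant.  (Edges between consecutive vertices may also be
   drawn on the spine; this never affects any triangle orientation.) *)
type_synonym book2_drawing = "nat \<Rightarrow> nat \<Rightarrow> bool"

(* Orientation of the triangle p,q,r (distinct vertices) traced in order p,q,r:
   for a<b<c, the triangle a->b->c->a is counterclockwise iff the edge ac lies in the
   upper page; cyclic rotations preserve, transpositions reverse the orientation. *)
definition ccw :: "book2_drawing \<Rightarrow> nat \<Rightarrow> nat \<Rightarrow> nat \<Rightarrow> bool" where
  "ccw D p q r =
     (let a = min p (min q r); c = max p (max q r)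
      in D a c = ((p < q \<and> q < r) \<or> (q < r \<and> r < p) \<or> (r < p \<and> p < q)))"

definition left_count :: "nat \<Rightarrow> book2_drawing \<Rightarrow> nat \<Rightarrow> nat \<Rightarrow> nat" where
  "left_count n D p q = card {r \<in> {0..<n} - {p, q}. ccw D p q r}"

definition edge_index :: "nat \<Rightarrow> book2_drawing \<Rightarrow> nat \<Rightarrow> nat \<Rightarrow> nat" where
  "edge_index n D p q = min (left_count n D p q) (n - 2 - left_count n D p q)"

definition E :: "nat \<Rightarrow> book2_drawing \<Rightarrow> nat \<Rightarrow> nat" where
  "E n D k = card {(p, q). p < q \<and> q < n \<and> edge_index n D p q = k}"

definition E_le :: "nat \<Rightarrow> book2_drawing \<Rightarrow> nat \<Rightarrow> nat" where
  "E_le n D k = (\<Sum>j\<le>k. E n D j)"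

definition E_le_le :: "nat \<Rightarrow> book2_drawing \<Rightarrow> nat \<Rightarrow> nat" where
  "E_le_le n D k = (\<Sum>j\<le>k. E_le n D j)"

end

theory Submission
  imports Defs
begin

text \<open>
  For \<open>k < n/2 - 1\<close> at most one orientation of an edge has at most \<open>k\<close> vertices on its
  left, so \<open>E_{\<le>\<le>k}(D)\<close> is the sum, over all directed arcs \<open>x \<rightarrow> y\<close>, of \<open>(k + 1 - l(x,y))\<^sub>+\<close>,
  where \<open>l(x,y)\<close> counts the vertices on the left of \<open>x \<rightarrow> y\<close>.
  At a vertex at either end of the spine the left sets of the incident arcs are strictly
  nested, so their left counts run exactly once through \<open>0, \<dots>, n - 2\<close>.
  Adding the last vertex \<open>m\<close> raises \<open>l\<close> by one precisely on the arcs having \<open>m\<close> on their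
  left; hence the weight with parameter \<open>k + 1\<close> is the weight with parameter \<open>k\<close> on the
  first \<open>n - 1\<close> vertices, plus the number \<open>R\<close> of their arcs with at most \<open>k\<close> vertices on
  the left and \<open>m\<close> on the right, plus \<open>2 \<cdot> C(k+2,2)\<close> from the star at \<open>m\<close>.
  Peeling off the first vertex repeatedly, its star contributes exactly \<open>k + 1, k, \<dots>, 1\<close>
  arcs to \<open>R\<close>, so \<open>R \<ge> C(k+2,2)\<close>, and induction on \<open>k\<close> gives
  \<open>3 C(k+2,3) + 3 C(k+2,2) = 3 C(k+3,3)\<close>.
\<close>

lemma ccw_swap:
  assumes "p \<noteq> q" "q \<noteq> r" "p \<noteq> r"
  shows "ccw D q p r \<longleftrightarrow> \<not> ccw D p q r"
  using assms unfolding ccw_def Let_def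
  by (cases "p < q"; cases "q < r"; cases "p < r"; simp add: min_def max_def)

lemma ccw_abc: "a < b \<Longrightarrow> b < c \<Longrightarrow> ccw D a b c \<longleftrightarrow> D a c"
  unfolding ccw_def Let_def by (simp add: min_def max_def)

lemma ccw_acb: "a < b \<Longrightarrow> b < c \<Longrightarrow> ccw D a c b \<longleftrightarrow> \<not> D a c"
  unfolding ccw_def Let_def by (auto simp add: min_def max_def)

lemma ccw_bca: "a < b \<Longrightarrow> b < c \<Longrightarrow> ccw D b c a \<longleftrightarrow> D a c"
  unfolding ccw_def Let_def by (auto simp add: min_def max_def)

definition left_set :: "book2_drawing \<Rightarrow> nat set \<Rightarrow> nat \<Rightarrow> nat \<Rightarrow> nat set" where
  "left_set D V x y = {r \<in> V - {x, y}. ccw D x y r}"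

lemma left_set_subset: "left_set D V x y \<subseteq> V"
  by (auto simp: left_set_def)

lemma left_count_eq_card_left_set: "left_count n D p q = card (left_set D {0..<n} p q)"
  by (simp add: left_count_def left_set_def)

lemma card_left_set_swap:
  assumes "finite V" "x \<in> V" "y \<in> V" "x \<noteq> y"
  shows "card (left_set D V x y) + card (left_set D V y x) = card V - 2"
proof -
  have "left_set D V y x = (V - {x, y}) - left_set D V x y"
    using ccw_swap[of x y _ D] assms(4) by (auto simp: left_set_def)
  moreover have "left_set D V x y \<subseteq> V - {x, y}"
    by (auto simp: left_set_def)
  moreover have "card (V - {x, y}) = card V - 2"
    using assms by (simp add: card_Diff_subset)
  ultimately show ?thesis
    using assms card_mono[of "V - {x, y}" "left_set D V x y"]
    by (simp add: card_Diff_subset finite_subset)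
qed

lemma card_left_set_less:
  assumes "finite V" "x \<in> V" "y \<in> V" "x \<noteq> y"
  shows "card (left_set D V x y) < card V - 1"
proof -
  have "card {x, y} \<le> card V"
    using assms by (intro card_mono) auto
  then show ?thesis
    using card_left_set_swap[OF assms, of D] assms(4) by simp
qed

lemma card_left_set_insert:
  assumes "finite V" "v \<notin> V" "x \<noteq> v" "y \<noteq> v"
  shows "card (left_set D (insert v V) x y) = card (left_set D V x y) + of_bool (ccw D x y v)"
proof -
  have "left_set D (insert v V) x y
      = (if ccw D x y v then insert v (left_set D V x y) else left_set D V x y)"
    using assms by (auto simp: left_set_def)
  then show ?thesis
    using assms by (simp add: left_set_def)
qed

lemma left_set_first_star:
  assumes "s < w" "w < t"
  shows "left_set D {s..<t} s w = (if D s w then {} else {s<..<w}) \<union> {r \<in> {w<..<t}. D s r}"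
proof -
  have mem: "r \<in> left_set D {s..<t} s w
      \<longleftrightarrow> s < r \<and> r < t \<and> r \<noteq> w \<and> (if r < w then \<not> D s w else D s r)" for r
  proof (cases "r < w")
    case True
    then show ?thesis using assms ccw_acb[of s r w D] by (auto simp: left_set_def)
  next
    case False
    then show ?thesis using assms ccw_abc[of s w r D] by (auto simp: left_set_def)
  qed
  show ?thesis using assms unfolding set_eq_iff mem by (cases "D s w") auto
qed

lemma left_set_last_star:
  assumes "x < m"
  shows "left_set D {0..<Suc m} x m = {r \<in> {..<x}. D r m} \<union> (if D x m then {} else {x<..<m})"
proof -
  have mem: "r \<in> left_set D {0..<Suc m} x m
      \<longleftrightarrow> r < m \<and> r \<noteq> x \<and> (if r < x then D r m else \<not> D x m)" for r
  proof (cases "r < x")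
    case True
    then show ?thesis using assms ccw_bca[of r x m D] by (auto simp: left_set_def)
  next
    case False
    then show ?thesis using assms ccw_acb[of x r m D] by (auto simp: left_set_def)
  qed
  show ?thesis using assms unfolding set_eq_iff mem by (cases "D x m") auto
qed

lemma inj_on_card_of_strict_chain:
  assumes "finite U" "\<And>a. a \<in> A \<Longrightarrow> S a \<subseteq> U"
    and "\<And>a b. a \<in> A \<Longrightarrow> b \<in> A \<Longrightarrow> a < b \<Longrightarrow> S a \<subset> S b \<or> S b \<subset> S a"
  shows "inj_on (\<lambda>a. card (S a)) (A :: 'a :: linorder set)"
proof (rule linorder_inj_onI')
  fix a b assume ab: "a \<in> A" "b \<in> A" "a < b"
  have fin: "finite (S a)" "finite (S b)"
    using ab assms(1,2) finite_subset by blast+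
  from assms(3)[OF ab] have "card (S a) < card (S b) \<or> card (S b) < card (S a)"
    using psubset_card_mono[OF fin(2), of "S a"] psubset_card_mono[OF fin(1), of "S b"] by blast
  then show "card (S a) \<noteq> card (S b)"
    by linarith
qed

lemma inj_on_first_star: "inj_on (\<lambda>w. card (left_set D {s..<t} s w)) {Suc s..<t}"
proof (rule inj_on_card_of_strict_chain[where U = "{s..<t}"])
  fix a b assume ab: "a \<in> {Suc s..<t}" "b \<in> {Suc s..<t}" "a < b"
  let ?L = "left_set D {s..<t} s"
  show "?L a \<subset> ?L b \<or> ?L b \<subset> ?L a"
  proof (cases "D s b")
    case True
    then have "b \<in> ?L a - ?L b" and "?L b \<subseteq> ?L a"
      using ab by (auto simp: left_set_first_star)
    then show ?thesis by blast
  next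
    case False
    then have "a \<in> ?L b - ?L a" and "?L a \<subseteq> ?L b"
      using ab by (auto simp: left_set_first_star) (metis linorder_neqE_nat)+
    then show ?thesis by blast
  qed
qed (simp_all add: left_set_subset)

lemma inj_on_last_star: "inj_on (\<lambda>x. card (left_set D {0..<Suc m} x m)) {0..<m}"
proof (rule inj_on_card_of_strict_chain[where U = "{0..<Suc m}"])
  fix a b assume ab: "a \<in> {0..<m}" "b \<in> {0..<m}" "a < b"
  let ?L = "\<lambda>x. left_set D {0..<Suc m} x m"
  show "?L a \<subset> ?L b \<or> ?L b \<subset> ?L a"
  proof (cases "D a m")
    case True
    then have "a \<in> ?L b - ?L a" and "?L a \<subseteq> ?L b"
      using ab by (auto simp: left_set_last_star)
    then show ?thesis by blast
  next
    case False
    then have "b \<in> ?L a - ?L b" and "?L b \<subseteq> ?L a"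
      using ab by (auto simp: left_set_last_star) (metis linorder_neqE_nat)+
    then show ?thesis by blast
  qed
qed (simp_all add: left_set_subset)

lemma inj_on_star_swap:
  assumes "finite V" "v \<in> V"
  shows "inj_on (\<lambda>w. card (left_set D V w v)) (V - {v})
    \<longleftrightarrow> inj_on (\<lambda>w. card (left_set D V v w)) (V - {v})"
proof -
  have "card (left_set D V w v) = card V - 2 - card (left_set D V v w)" if "w \<in> V - {v}" for w
    using card_left_set_swap[of V v w D] assms that by auto
  moreover have "card (left_set D V v w) \<le> card V - 2" if "w \<in> V - {v}" for w
    using card_left_set_swap[of V v w D] assms that by auto
  ultimately show ?thesis
    unfolding inj_on_def by (metis (no_types, lifting) diff_diff_cancel)
qed

lemma sum_reindex_lessThan_card:
  assumes "finite A" "inj_on f A" "\<And>a. a \<in> A \<Longrightarrow> f a < card A"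
  shows "(\<Sum>a\<in>A. g (f a)) = (\<Sum>i<card A. g i)"
proof -
  have "f ` A = {..<card A}"
    using assms by (intro card_subset_eq) (auto simp: card_image)
  then show ?thesis
    using sum.reindex[OF assms(2), of g] by simp
qed

lemma sum_star:
  assumes "finite V" "v \<in> V" and inj: "inj_on (\<lambda>w. card (left_set D V v w)) (V - {v})"
  shows "(\<Sum>w\<in>V - {v}. g (card (left_set D V v w))) = (\<Sum>i<card V - 1. g i)"
    and "(\<Sum>w\<in>V - {v}. g (card (left_set D V w v))) = (\<Sum>i<card V - 1. g i)"
proof -
  have card: "card (V - {v}) = card V - 1"
    using assms by simp
  show "(\<Sum>w\<in>V - {v}. g (card (left_set D V v w))) = (\<Sum>i<card V - 1. g i)"
    using sum_reindex_lessThan_card[of "V - {v}", OF _ inj] card_left_set_less[of V v] assms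
    unfolding card by auto
  show "(\<Sum>w\<in>V - {v}. g (card (left_set D V w v))) = (\<Sum>i<card V - 1. g i)"
    using sum_reindex_lessThan_card[of "V - {v}" "\<lambda>w. card (left_set D V w v)"]
      inj_on_star_swap[of V v D] card_left_set_less[of V _ v] assms
    unfolding card by auto
qed

lemma sum_lessThan_of_bool_less:
  assumes "k \<le> N"
  shows "(\<Sum>i<N. of_bool (i < k) :: nat) = k"
proof -
  have "{..<N} \<inter> {i. i < k} = {..<k}"
    using assms by auto
  then show ?thesis
    by simp
qed

lemma sum_lessThan_diff: "k \<le> N \<Longrightarrow> (\<Sum>i<N. k - i) = Suc k choose 2"
proof (induction k)
  case (Suc k)
  have "(\<Sum>i<N. Suc k - i) = (\<Sum>i<N. (k - i) + of_bool (i < Suc k))"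
    by (rule sum.cong) auto
  also have "\<dots> = (Suc k choose 2) + Suc k"
    using Suc sum_lessThan_of_bool_less[of "Suc k" N] by (simp add: sum.distrib)
  finally show ?case
    by (simp add: numeral_2_eq_2)
qed simp

definition arcs :: "nat set \<Rightarrow> (nat \<times> nat) set" where
  "arcs V = {(x, y). x \<in> V \<and> y \<in> V \<and> x \<noteq> y}"

lemma finite_arcs: "finite V \<Longrightarrow> finite (arcs V)"
  by (rule finite_subset[of _ "V \<times> V"]) (auto simp: arcs_def)

lemma sum_arcs_insert:
  assumes "finite V" "v \<notin> V"
  shows "(\<Sum>a\<in>arcs (insert v V). f a) = (\<Sum>a\<in>arcs V. f a) + (\<Sum>w\<in>V. f (v, w) + f (w, v))"
proof -
  have "arcs (insert v V) = arcs V \<union> (Pair v ` V \<union> (\<lambda>w. (w, v)) ` V)"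
    using assms(2) by (auto simp: arcs_def)
  moreover have "arcs V \<inter> (Pair v ` V \<union> (\<lambda>w. (w, v)) ` V) = {}"
    and "Pair v ` V \<inter> (\<lambda>w. (w, v)) ` V = {}"
    using assms(2) by (auto simp: arcs_def)
  ultimately show ?thesis
    using assms(1) by (simp add: sum.union_disjoint finite_arcs sum.reindex inj_on_def sum.distrib)
qed

definition edges :: "nat \<Rightarrow> (nat \<times> nat) set" where
  "edges n = {(p, q). p < q \<and> q < n}"

lemma finite_edges: "finite (edges n)"
  by (rule finite_subset[of _ "{..<n} \<times> {..<n}"]) (auto simp: edges_def)

lemma sum_arcs_eq_sum_edges: "(\<Sum>a\<in>arcs {0..<n}. f a) = (\<Sum>(p, q)\<in>edges n. f (p, q) + f (q, p))"
proof -
  have "arcs {0..<n} = edges n \<union> prod.swap ` edges n" "edges n \<inter> prod.swap ` edges n = {}"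
    by (auto simp: arcs_def edges_def)
  moreover have "(\<Sum>a\<in>prod.swap ` edges n. f a) = (\<Sum>(p, q)\<in>edges n. f (q, p))"
    by (subst sum.reindex) (auto intro!: sum.cong)
  ultimately show ?thesis
    by (simp add: sum.union_disjoint finite_edges sum.distrib case_prod_beta')
qed

text \<open>Truncated subtraction makes each summand the positive part \<open>(k - l(x,y))\<^sub>+\<close>.\<close>

definition arc_weight :: "book2_drawing \<Rightarrow> nat set \<Rightarrow> nat \<Rightarrow> nat" where
  "arc_weight D V k = (\<Sum>(x, y)\<in>arcs V. k - card (left_set D V x y))"

lemma E_eq_sum: "E n D i = (\<Sum>(p, q)\<in>edges n. of_bool (edge_index n D p q = i))"
proof -
  have "{(p, q). p < q \<and> q < n \<and> edge_index n D p q = i}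
      = edges n \<inter> {e. edge_index n D (fst e) (snd e) = i}"
    by (auto simp: edges_def)
  then show ?thesis
    by (simp add: E_def finite_edges case_prod_beta')
qed

lemma E_le_eq_sum: "E_le n D k = (\<Sum>(p, q)\<in>edges n. of_bool (edge_index n D p q \<le> k))"
proof (induction k)
  case (Suc k)
  have "E_le n D (Suc k) = E_le n D k + E n D (Suc k)"
    by (simp add: E_le_def)
  also have "\<dots> = (\<Sum>(p, q)\<in>edges n. of_bool (edge_index n D p q \<le> Suc k))"
    unfolding Suc E_eq_sum sum.distrib[symmetric]
    by (intro sum.cong) (auto simp del: sum_of_bool_eq)
  finally show ?case .
qed (simp add: E_le_def E_eq_sum)

lemma E_le_le_eq_sum: "E_le_le n D k = (\<Sum>(p, q)\<in>edges n. Suc k - edge_index n D p q)"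
proof (induction k)
  case 0
  show ?case
    unfolding E_le_le_def E_le_eq_sum by (auto simp del: sum_of_bool_eq intro!: sum.cong)
next
  case (Suc k)
  have "E_le_le n D (Suc k) = E_le_le n D k + E_le n D (Suc k)"
    by (simp add: E_le_le_def)
  also have "\<dots> = (\<Sum>(p, q)\<in>edges n. Suc (Suc k) - edge_index n D p q)"
    unfolding Suc E_le_eq_sum sum.distrib[symmetric]
    by (intro sum.cong) (auto simp del: sum_of_bool_eq)
  finally show ?case .
qed

lemma E_le_le_eq_arc_weight:
  assumes "2 * k + 2 < n"
  shows "E_le_le n D k = arc_weight D {0..<n} (Suc k)"
proof -
  have "Suc k - edge_index n D p q
      = (Suc k - card (left_set D {0..<n} p q)) + (Suc k - card (left_set D {0..<n} q p))"
    if "(p, q) \<in> edges n" for p q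
    using that assms card_left_set_swap[of "{0..<n}" p q D]
    by (auto simp: edges_def edge_index_def left_count_eq_card_left_set)
  then show ?thesis
    unfolding E_le_le_eq_sum arc_weight_def sum_arcs_eq_sum_edges
    by (intro sum.cong) auto
qed

definition right_arcs :: "book2_drawing \<Rightarrow> nat set \<Rightarrow> nat \<Rightarrow> nat \<Rightarrow> (nat \<times> nat) set" where
  "right_arcs D V t k = {(x, y) \<in> arcs V. card (left_set D V x y) < k \<and> \<not> ccw D x y t}"

lemma card_right_arcs_eq_sum:
  "finite V \<Longrightarrow> card (right_arcs D V t k) =
     (\<Sum>(x, y)\<in>arcs V. of_bool (card (left_set D V x y) < k \<and> \<not> ccw D x y t))"
  by (simp add: right_arcs_def finite_arcs case_prod_beta' Int_def conj_commute)

lemma first_star_right_count: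
  assumes "k < t - s"
  shows "(\<Sum>w\<in>{Suc s..<t}.
            of_bool (card (left_set D {s..<t} s w) < k \<and> \<not> ccw D s w t)
          + of_bool (card (left_set D {s..<t} w s) < k \<and> \<not> ccw D w s t)) = k"
proof -
  let ?V = "{s..<t}"
  have V: "?V - {s} = {Suc s..<t}" "card ?V - 1 = t - s - 1" "s \<in> ?V"
    using assms by auto
  have "ccw D s w t = D s t" "ccw D w s t = (\<not> D s t)" if "w \<in> {Suc s..<t}" for w
    using that ccw_abc[of s w t D] ccw_swap[of s w t D] by auto
  then have "(\<Sum>w\<in>{Suc s..<t}.
            of_bool (card (left_set D ?V s w) < k \<and> \<not> ccw D s w t)
          + of_bool (card (left_set D ?V w s) < k \<and> \<not> ccw D w s t))
        = (if D s t then (\<Sum>w\<in>?V - {s}. of_bool (card (left_set D ?V w s) < k))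
           else (\<Sum>w\<in>?V - {s}. of_bool (card (left_set D ?V s w) < k)))"
    unfolding V by (cases "D s t") (auto intro!: sum.cong)
  also have "\<dots> = (\<Sum>i<t - s - 1. of_bool (i < k))"
    using sum_star[where g = "\<lambda>i. of_bool (i < k)", OF finite_atLeastLessThan V(3)
        inj_on_first_star[of D s t, folded V(1)]]
    by (cases "D s t") (simp_all only: V(2) if_True if_False)
  also have "\<dots> = k"
    using assms by (intro sum_lessThan_of_bool_less) simp
  finally show ?thesis .
qed

lemma card_right_arcs_Suc:
  assumes "Suc k < t - s"
  shows "card (right_arcs D {Suc s..<t} t k) + Suc k \<le> card (right_arcs D {s..<t} t (Suc k))"
proof -
  let ?V = "{Suc s..<t}"
  let ?P = "\<lambda>x y. of_bool (card (left_set D {s..<t} x y) < Suc k \<and> \<not> ccw D x y t) :: nat"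
  have V: "{s..<t} = insert s ?V" "s \<notin> ?V"
    using assms by auto
  have "card (left_set D {s..<t} x y) \<le> Suc (card (left_set D ?V x y))" if "(x, y) \<in> arcs ?V" for x y
    using that card_left_set_insert[of ?V s x y D] unfolding V(1) by (auto simp: arcs_def)
  then have "card (right_arcs D ?V t k) \<le> (\<Sum>(x, y)\<in>arcs ?V. ?P x y)"
    unfolding card_right_arcs_eq_sum[OF finite_atLeastLessThan]
    by (intro sum_mono) (fastforce simp del: sum_of_bool_eq)
  then have "card (right_arcs D ?V t k) + Suc k
      \<le> (\<Sum>(x, y)\<in>arcs ?V. ?P x y) + (\<Sum>w\<in>?V. ?P s w + ?P w s)"
    using first_star_right_count[OF assms, of D] by simp
  also have "\<dots> = (\<Sum>(x, y)\<in>arcs {s..<t}. ?P x y)"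
    using sum_arcs_insert[OF finite_atLeastLessThan V(2), of "\<lambda>(x, y). ?P x y"]
    unfolding V(1)[symmetric] by simp
  also have "\<dots> = card (right_arcs D {s..<t} t (Suc k))"
    by (simp only: card_right_arcs_eq_sum[OF finite_atLeastLessThan])
  finally show ?thesis .
qed

lemma card_right_arcs_lower_bound: "k < t - s \<Longrightarrow> Suc k choose 2 \<le> card (right_arcs D {s..<t} t k)"
proof (induction k arbitrary: s)
  case (Suc k)
  then have "Suc k choose 2 \<le> card (right_arcs D {Suc s..<t} t k)"
    by simp
  then show ?case
    using card_right_arcs_Suc[OF Suc.prems, of D] by (simp add: numeral_2_eq_2)
qed (simp add: binomial_eq_0)

lemma last_star_weight:
  assumes "k \<le> m"
  shows "(\<Sum>x\<in>{0..<m}. (k - card (left_set D {0..<Suc m} m x))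
                      + (k - card (left_set D {0..<Suc m} x m)))
    = 2 * (Suc k choose 2)"
proof -
  let ?V = "{0..<Suc m}"
  have V: "?V - {m} = {0..<m}" "card ?V - 1 = m" "m \<in> ?V"
    by auto
  have "inj_on (\<lambda>x. card (left_set D ?V m x)) (?V - {m})"
    using inj_on_star_swap[of ?V m D] inj_on_last_star[of D m] V by simp
  from sum_star[where g = "\<lambda>i. k - i", OF finite_atLeastLessThan V(3) this]
  show ?thesis
    using sum_lessThan_diff[OF assms] unfolding V by (simp add: sum.distrib)
qed

lemma arc_weight_Suc:
  assumes "k < m"
  shows "arc_weight D {0..<Suc m} (Suc k)
    = arc_weight D {0..<m} k + card (right_arcs D {0..<m} m (Suc k)) + 2 * (Suc (Suc k) choose 2)"
proof -
  let ?V = "{0..<m}"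
  have V: "{0..<Suc m} = insert m ?V" "m \<notin> ?V"
    by auto
  have "Suc k - card (left_set D {0..<Suc m} x y)
      = (k - card (left_set D ?V x y)) + of_bool (card (left_set D ?V x y) < Suc k \<and> \<not> ccw D x y m)"
    if "(x, y) \<in> arcs ?V" for x y
    using that card_left_set_insert[of ?V m x y D] unfolding V(1) by (auto simp: arcs_def)
  then have "(\<Sum>(x, y)\<in>arcs ?V. Suc k - card (left_set D {0..<Suc m} x y))
      = arc_weight D ?V k + card (right_arcs D ?V m (Suc k))"
    unfolding arc_weight_def card_right_arcs_eq_sum[OF finite_atLeastLessThan] sum.distrib[symmetric]
    by (intro sum.cong) (auto simp del: sum_of_bool_eq)
  moreover have "(\<Sum>x\<in>?V. (Suc k - card (left_set D {0..<Suc m} m x))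
                      + (Suc k - card (left_set D {0..<Suc m} x m)))
      = 2 * (Suc (Suc k) choose 2)"
    using assms by (intro last_star_weight) simp
  ultimately show ?thesis
    unfolding arc_weight_def V(1) sum_arcs_insert[OF finite_atLeastLessThan V(2)]
    by (simp add: V(1)[symmetric])
qed

lemma arc_weight_lower_bound: "2 * k < n \<Longrightarrow> 3 * (k + 2 choose 3) \<le> arc_weight D {0..<n} k"
proof (induction k arbitrary: n)
  case (Suc k)
  then obtain m where m: "n = Suc m" "2 * k + 1 < m"
    by (cases n) auto
  then have "3 * (k + 2 choose 3) \<le> arc_weight D {0..<m} k"
    using Suc.IH by simp
  moreover have "Suc (Suc k) choose 2 \<le> card (right_arcs D {0..<m} m (Suc k))"
    using m by (intro card_right_arcs_lower_bound) simp
  ultimately show ?case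
    using arc_weight_Suc[of k m D] m by (simp add: numeral_3_eq_3 numeral_2_eq_2)
qed (simp add: binomial_eq_0)

theorem theorem6:
  fixes n k :: nat and D :: book2_drawing
  assumes "n \<ge> 3"
    and "real k < real n / 2 - 1"
  shows "E_le_le n D k \<ge> 3 * ((k + 3) choose 3)"
proof -
  from assms(2) have "real (2 * Suc k) < real n"
    by simp
  then have "2 * Suc k < n"
    by (simp only: of_nat_less_iff)
  then have "3 * (Suc k + 2 choose 3) \<le> arc_weight D {0..<n} (Suc k)"
    by (rule arc_weight_lower_bound)
  moreover have "E_le_le n D k = arc_weight D {0..<n} (Suc k)"
    using \<open>2 * Suc k < n\<close> by (intro E_le_le_eq_arc_weight) simp
  ultimately show ?thesis
    by (simp add: numeral_3_eq_3)
qed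

end
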